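(* Let $A$ be a type, $M=\{m_1,\dots,m_n\}$ a set of constructors for $A$, and $p:A\to B$, $h:A\to C$ programs. (i) If $(\textit{null}, c_1,\dots,c_n)$ is a solution of $\mathsf{PLP}(M,p,h)$, then $(\textit{null}, c_1\triangle \textit{null},\dots,c_n\triangle\textit{null})$ is a solution of $\mathsf{LP}(M,p,h)$. (ii) If $(f,c_1,\dots,c_n)$ is a solution of $\mathsf{PLP}(M,p,h)$ and $(f',c_1',\dots,c_n')$ is a solution of $\mathsf{LP}(M,f,h\triangle f)$, then $(f\triangle f', c_1^*,\dots,c_n^* )$ is a solution of $\mathsf{LP}(M,p,h)$, where $$c_i^*=\big(c_i\circ \mathsf F_{m_i}\varphi_l\big)\triangle\big(c_i'\circ\mathsf F_{m_i}\varphi_r\big),\qquad \varphi_l(a,(b,c))=(a,b),\quad \varphi_r(a,(b,c))=((a,b),c).$$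
   Context: Function notation: $(f\circ g)\,x=f(g\,x)$, $(f\triangle g)\,x=(f\,x,g\,x)$, $(f\times g)(x_1,x_2)=(f\,x_1,g\,x_2)$. $\textit{null}$ denotes the constant function returning the unit value $()$ (representing "no supplementary information"). Functors: only functors built from the identity functor $\mathsf I$ ($\mathsf I A=A$, $\mathsf I f=f$), constant functors $!A$ ($(!A)B=A$, $(!A)f=\mathrm{id}_A$), and products $\mathsf F_1\times\mathsf F_2$ ($(\mathsf F_1\times\mathsf F_2)A=\mathsf F_1A\times\mathsf F_2A$, $(\mathsf F_1\times\mathsf F_2)f=\mathsf F_1f\times\mathsf F_2f$) are considered. A constructor $m$ for a type $A$ is a function $m:\mathsf F_mA\to A$ with an attached functor $\mathsf F_m$ (e.g. list concatenation $\lambda(l_1,l_2).\,l_1+\!\!+\,l_2$ with $\mathsf F_m=\mathsf I\times\mathsf I$). Lifting problem $\mathsf{LP}(M,p,h)$ for $M=\{m_1,\dots,m_n\}$, $p:A\to B$, $h:A\to C$: find a lifting scheme $f$ (a function on $A$) and combinators $c_1,\dots,c_n$ such that for all $i$, $(p\triangle f)\circ m_i=c_i\circ\mathsf F_{m_i}(h\triangle f)$ (equality of functions). Partial lifting problem $\mathsf{PLP}(M,p,h)$: find $f,c_1,\dots,c_n$ with $p\circ m_i=c_i\circ\mathsf F_{m_i}(h\triangle f)$ for all $i$. *)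

theory Defs
  imports Main
begin

text \<open>A shape describes the functor; constant functors carry
  the set of admissible constants (all constants live in one ambient type 'k).\<close>
datatype 'k fshape = FId | FConst "'k set" | FProd "'k fshape" "'k fshape"

text \<open>Values of F A: the map function generated by the datatype is the functor action.\<close>
datatype ('k, 'a) fval = VI 'a | VK 'k | VP "('k, 'a) fval" "('k, 'a) fval"

fun in_F :: "'k fshape \<Rightarrow> ('k, 'a) fval \<Rightarrow> bool" where
  "in_F FId (VI a) = True"
| "in_F (FConst K) (VK k) = (k \<in> K)"
| "in_F (FProd F1 F2) (VP x y) = (in_F F1 x \<and> in_F F2 y)"
| "in_F _ _ = False"

definition fmap :: "('a \<Rightarrow> 'b) \<Rightarrow> ('k, 'a) fval \<Rightarrow> ('k, 'b) fval" where
  "fmap f = map_fval id f"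

definition split_pair :: "('a \<Rightarrow> 'b) \<Rightarrow> ('a \<Rightarrow> 'c) \<Rightarrow> 'a \<Rightarrow> 'b \<times> 'c" (infixr "\<triangle>" 80) where
  "(f \<triangle> g) x = (f x, g x)"

definition null :: "'a \<Rightarrow> unit" where
  "null x = ()"

definition LP :: "nat \<Rightarrow> (nat \<Rightarrow> 'k fshape) \<Rightarrow> (nat \<Rightarrow> ('k, 'a) fval \<Rightarrow> 'a)
    \<Rightarrow> ('a \<Rightarrow> 'b) \<Rightarrow> ('a \<Rightarrow> 'c) \<Rightarrow> ('a \<Rightarrow> 'd) \<Rightarrow> (nat \<Rightarrow> ('k, 'c \<times> 'd) fval \<Rightarrow> 'b \<times> 'd) \<Rightarrow> bool" where
  "LP n F m p h f c \<longleftrightarrow>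
     (\<forall>i<n. \<forall>x. in_F (F i) x \<longrightarrow> ((p \<triangle> f) \<circ> m i) x = (c i \<circ> fmap (h \<triangle> f)) x)"

definition PLP :: "nat \<Rightarrow> (nat \<Rightarrow> 'k fshape) \<Rightarrow> (nat \<Rightarrow> ('k, 'a) fval \<Rightarrow> 'a)
    \<Rightarrow> ('a \<Rightarrow> 'b) \<Rightarrow> ('a \<Rightarrow> 'c) \<Rightarrow> ('a \<Rightarrow> 'd) \<Rightarrow> (nat \<Rightarrow> ('k, 'c \<times> 'd) fval \<Rightarrow> 'b) \<Rightarrow> bool" where
  "PLP n F m p h f c \<longleftrightarrow>
     (\<forall>i<n. \<forall>x. in_F (F i) x \<longrightarrow> (p \<circ> m i) x = (c i \<circ> fmap (h \<triangle> f)) x)"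

definition phi_l :: "'a \<times> ('b \<times> 'c) \<Rightarrow> 'a \<times> 'b" where
  "phi_l = (\<lambda>(a, (b, c)). (a, b))"

definition phi_r :: "'a \<times> ('b \<times> 'c) \<Rightarrow> ('a \<times> 'b) \<times> 'c" where
  "phi_r = (\<lambda>(a, (b, c)). ((a, b), c))"

end

theory Submission
  imports Defs
begin

text \<open>For the composite scheme \<open>f \<triangle> f'\<close>, the first component of the combined
  equation is the partial solution with the extra component forgotten by \<open>phi_l\<close>;
  the second is the lifting of \<open>f\<close>, which sees \<open>(h \<triangle> f) \<triangle> f'\<close> once
  \<open>phi_r\<close> reassociates the pair.\<close>

lemma fmap_fmap: "fmap g (fmap f x) = fmap (g \<circ> f) x"
  unfolding fmap_def by (simp add: fval.map_comp)

lemma phi_l_split: "phi_l \<circ> (h \<triangle> (f \<triangle> f')) = h \<triangle> f"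
  by (rule ext) (simp add: phi_l_def split_pair_def)

lemma phi_r_split: "phi_r \<circ> (h \<triangle> (f \<triangle> f')) = (h \<triangle> f) \<triangle> f'"
  by (rule ext) (simp add: phi_r_def split_pair_def)

lemma LP_null_if_PLP_null:
  assumes "PLP n F m p h null c"
  shows "LP n F m p h null (\<lambda>i. c i \<triangle> null)"
  using assms unfolding PLP_def LP_def by (simp add: split_pair_def null_def)

lemma LP_split_if_PLP_and_LP:
  fixes m :: "nat \<Rightarrow> ('k, 'a) fval \<Rightarrow> 'a"
  assumes partial: "PLP n F m p h f c"
    and lifting: "LP n F m f (h \<triangle> f) f' c'"
  shows "LP n F m p h (f \<triangle> f') (\<lambda>i. (c i \<circ> fmap phi_l) \<triangle> (c' i \<circ> fmap phi_r))"
  unfolding LP_def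
proof (intro allI impI)
  fix i and x :: "('k, 'a) fval" assume i: "i < n" and x: "in_F (F i) x"
  have "p (m i x) = c i (fmap phi_l (fmap (h \<triangle> f \<triangle> f') x))"
    using partial i x unfolding PLP_def by (simp add: fmap_fmap phi_l_split)
  moreover have "(f \<triangle> f') (m i x) = c' i (fmap phi_r (fmap (h \<triangle> f \<triangle> f') x))"
    using lifting i x unfolding LP_def by (simp add: fmap_fmap phi_r_split split_pair_def)
  ultimately show "((p \<triangle> f \<triangle> f') \<circ> m i) x
      = ((\<lambda>i. (c i \<circ> fmap phi_l) \<triangle> (c' i \<circ> fmap phi_r)) i \<circ> fmap (h \<triangle> f \<triangle> f')) x"
    by (simp add: split_pair_def)
qed

theorem theorem1:
  fixes n :: nat and F :: "nat \<Rightarrow> 'k fshape" and m :: "nat \<Rightarrow> ('k, 'a) fval \<Rightarrow> 'a"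
    and p :: "'a \<Rightarrow> 'b" and h :: "'a \<Rightarrow> 'c"
  shows "(\<forall>c :: nat \<Rightarrow> ('k, 'c \<times> unit) fval \<Rightarrow> 'b.
            PLP n F m p h null c \<longrightarrow> LP n F m p h null (\<lambda>i. c i \<triangle> null))
       \<and> (\<forall>(f :: 'a \<Rightarrow> 'd) (c :: nat \<Rightarrow> ('k, 'c \<times> 'd) fval \<Rightarrow> 'b)
            (f' :: 'a \<Rightarrow> 'e) (c' :: nat \<Rightarrow> ('k, ('c \<times> 'd) \<times> 'e) fval \<Rightarrow> 'd \<times> 'e).
            PLP n F m p h f c \<and> LP n F m f (h \<triangle> f) f' c' \<longrightarrow>
            LP n F m p h (f \<triangle> f')
              (\<lambda>i. (c i \<circ> fmap phi_l) \<triangle> (c' i \<circ> fmap phi_r)))"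
  using LP_null_if_PLP_null LP_split_if_PLP_and_LP by blast

end
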